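(* Let $G$ be an index coding problem on $n$ messages. The capacity region $\mathscr{C}$ of $G$ equals the closure of the set of all nonnegative rate tuples $(R_1,\ldots,R_n)$ for which there exists a tuple ${\bf t}=(t_1,\ldots,t_n)$ of nonnegative integers, not all zero, with \[ R_j\le \frac{t_j}{\log_2 \chi_f(\Gamma_{\bf t}(G))},\quad j\in[1:n], \] where $\chi_f$ denotes the fractional chromatic number.
   Context: Index coding: an instance with $n$ messages is specified by side information sets $A_1,\ldots,A_n$ with $A_j\subseteq[1:n]\setminus\{j\}$ (equivalently a directed side information graph $G$ on vertex set $[1:n]$ with an edge $i\to j$ iff $i\in A_j$); we identify the problem with $G$. For $x^n=(x_1,\ldots,x_n)$ write $x(A)=(x_i: i\in A)$. A $(t_1,\ldots,t_n,r)$ index code (with $t_j$ nonnegative integers and $r$ a positive integer) consists of an encoder $\phi:\prod_{i=1}^n\{0,1\}^{t_i}\to\{0,1\}^r$ and decoders $\psi_j:\{0,1\}^r\times\prod_{k\in A_j}\{0,1\}^{t_k}\to\{0,1\}^{t_j}$ such that $\psi_j(\phi(x^n),x(A_j))=x_j$ for all $x^n\in\prod_i\{0,1\}^{t_i}$ and all $j$. A nonnegative rate tuple $(R_1,\ldots,R_n)$ is achievable if there exists a $(t_1,\ldots,t_n,r)$ index code with $R_j\le t_j/r$ for all $j$. The capacity region $\mathscr{C}$ is the closure of the set of achievable rate tuples. Confusion graph: for a length tuple ${\bf t}=(t_1,\ldots,t_n)$, two message tuples $x^n,z^n\in\prod_i\{0,1\}^{t_i}$ are confusable at receiver $j$ if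 $x_j\ne z_j$ and $x_i=z_i$ for all $i\in A_j$; they are confusable if confusable at some receiver. $\Gamma_{\bf t}(G)$ is the undirected graph with vertex set $\prod_i\{0,1\}^{t_i}$ in which two vertices are adjacent iff they are confusable. The fractional chromatic number is $\chi_f(\Gamma)=\inf_b \chi^{(b)}(\Gamma)/b$, where $\chi^{(b)}(\Gamma)$ is the least number of colors in an assignment of $b$-element color sets to vertices such that adjacent vertices receive disjoint sets. *)

theory Defs
  imports "HOL-Analysis.Analysis"
begin

text \<open>Messages are indexed by a finite type 'n (so n = CARD('n)).
  Side information: A j is the set of messages known to receiver j.\<close>

definition msgs :: "('n \<Rightarrow> nat) \<Rightarrow> ('n \<Rightarrow> bool list) set" where
  "msgs t = {x. \<forall>i. length (x i) = t i}"

definition index_code ::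
  "('n \<Rightarrow> 'n set) \<Rightarrow> ('n \<Rightarrow> nat) \<Rightarrow> nat \<Rightarrow>
   (('n \<Rightarrow> bool list) \<Rightarrow> bool list) \<Rightarrow>
   ('n \<Rightarrow> bool list \<Rightarrow> ('n \<Rightarrow> bool list) \<Rightarrow> bool list) \<Rightarrow> bool" where
  "index_code A t r \<phi> \<psi> \<longleftrightarrow> r > 0 \<and>
     (\<forall>x\<in>msgs t. length (\<phi> x) = r) \<and>
     (\<forall>j. \<forall>x\<in>msgs t. \<psi> j (\<phi> x) (restrict x (A j)) = x j)"

definition achievable :: "('n::finite \<Rightarrow> 'n set) \<Rightarrow> real^'n \<Rightarrow> bool" where
  "achievable A R \<longleftrightarrow> (\<forall>j. R $ j \<ge> 0) \<and>
     (\<exists>t r \<phi> \<psi>. index_code A t r \<phi> \<psi> \<and> (\<forall>j. R $ j \<le> real (t j) / real r))"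

definition capacity_region :: "('n::finite \<Rightarrow> 'n set) \<Rightarrow> (real^'n) set" where
  "capacity_region A = closure {R. achievable A R}"

text \<open>Confusion graph: vertex set msgs t, adjacency = confusability.\<close>
definition confusable :: "('n \<Rightarrow> 'n set) \<Rightarrow> ('n \<Rightarrow> bool list) \<Rightarrow> ('n \<Rightarrow> bool list) \<Rightarrow> bool" where
  "confusable A x z \<longleftrightarrow> (\<exists>j. x j \<noteq> z j \<and> (\<forall>i\<in>A j. x i = z i))"

definition b_fold_colorable :: "'v set \<Rightarrow> ('v \<Rightarrow> 'v \<Rightarrow> bool) \<Rightarrow> nat \<Rightarrow> nat \<Rightarrow> bool" where
  "b_fold_colorable V E b k \<longleftrightarrow> (\<exists>c :: 'v \<Rightarrow> nat set.
     (\<forall>v\<in>V. c v \<subseteq> {..<k} \<and> card (c v) = b) \<and>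
     (\<forall>u\<in>V. \<forall>v\<in>V. E u v \<longrightarrow> c u \<inter> c v = {}))"

definition b_fold_chromatic :: "'v set \<Rightarrow> ('v \<Rightarrow> 'v \<Rightarrow> bool) \<Rightarrow> nat \<Rightarrow> nat" where
  "b_fold_chromatic V E b = (LEAST k. b_fold_colorable V E b k)"

definition frac_chromatic :: "'v set \<Rightarrow> ('v \<Rightarrow> 'v \<Rightarrow> bool) \<Rightarrow> real" where
  "frac_chromatic V E = (INF b\<in>{b::nat. b \<ge> 1}. real (b_fold_chromatic V E b) / real b)"

definition chi_f_confusion :: "('n \<Rightarrow> 'n set) \<Rightarrow> ('n \<Rightarrow> nat) \<Rightarrow> real" where
  "chi_f_confusion A t = frac_chromatic (msgs t) (confusable A)"

end

theory Submission
  imports Defs "HOL-Real_Asymp.Real_Asymp"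
begin

text \<open>An index code of length r is the same as a proper colouring of the confusion graph with
  2^r colours, which gives the outer bound. For the inner bound, take a b-fold colouring of
  the confusion graph with K/b close to its fractional chromatic number. Splitting messages of
  length k t into k blocks of length t, the k-fold product of this colouring is a b^k-fold
  colouring of the confusion graph for k t with K^k colours. A greedy covering argument turns
  it into a proper colouring with about (K/b)^k log |V| colours, and log |V| grows only
  linearly in k, so the resulting codes approach the rates t_j / log (K/b) as k grows.\<close>

lemma b_fold_colorable_mono:
  assumes "b_fold_colorable V E b k" "k \<le> k'"
  shows "b_fold_colorable V E b k'"
proof -
  obtain c where c: "\<forall>v\<in>V. c v \<subseteq> {..<k} \<and> card (c v) = b"
      "\<forall>u\<in>V. \<forall>v\<in>V. E u v \<longrightarrow> c u \<inter> c v = {}"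
    using assms(1) unfolding b_fold_colorable_def by blast
  moreover have "{..<k} \<subseteq> {..<k'}" using assms(2) by simp
  ultimately show ?thesis unfolding b_fold_colorable_def by (meson subset_trans)
qed

lemma b_fold_colorable_by_colour_set:
  fixes c :: "'v \<Rightarrow> 'c set"
  assumes "finite Col" "\<And>v. v \<in> V \<Longrightarrow> c v \<subseteq> Col \<and> card (c v) = b"
    and "\<And>u v. u \<in> V \<Longrightarrow> v \<in> V \<Longrightarrow> E u v \<Longrightarrow> c u \<inter> c v = {}"
  shows "b_fold_colorable V E b (card Col)"
proof -
  obtain h where h: "bij_betw h Col {..<card Col}"
    using assms(1) by (metis ex_bij_betw_finite_nat atLeast0LessThan)
  have inj: "inj_on h Col" using h by (rule bij_betw_imp_inj_on)
  have "h ` c v \<subseteq> {..<card Col} \<and> card (h ` c v) = b" if "v \<in> V" for v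
  proof -
    from assms(2)[OF that] have cv: "c v \<subseteq> Col" "card (c v) = b" by auto
    have "h ` c v \<subseteq> h ` Col" using cv(1) by (rule image_mono)
    also have "\<dots> = {..<card Col}" using h by (rule bij_betw_imp_surj_on)
    finally show ?thesis using card_image[OF inj_on_subset[OF inj cv(1)]] cv(2) by simp
  qed
  moreover have "h ` c u \<inter> h ` c v = {}" if "u \<in> V" "v \<in> V" "E u v" for u v
  proof -
    have "h ` c u \<inter> h ` c v = h ` (c u \<inter> c v)"
      using assms(2)[OF that(1)] assms(2)[OF that(2)] by (simp add: inj_on_image_Int[OF inj])
    then show ?thesis using assms(3)[OF that] by simp
  qed
  ultimately show ?thesis
    unfolding b_fold_colorable_def by (intro exI[of _ "\<lambda>v. h ` c v"]) blast
qed

lemma b_fold_colorable_card: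
  assumes "finite V" "\<And>v. v \<in> V \<Longrightarrow> \<not> E v v"
  shows "b_fold_colorable V E b (card V * b)"
proof -
  have "b_fold_colorable V E b (card (V \<times> {..<b}))"
    by (rule b_fold_colorable_by_colour_set[where c = "\<lambda>v. {v} \<times> {..<b}"])
      (use assms in \<open>auto simp: card_cartesian_product\<close>)
  then show ?thesis by (simp add: card_cartesian_product)
qed

lemma b_fold_colorable_chromatic:
  assumes "finite V" "\<And>v. v \<in> V \<Longrightarrow> \<not> E v v"
  shows "b_fold_colorable V E b (b_fold_chromatic V E b)"
  unfolding b_fold_chromatic_def by (rule LeastI, rule b_fold_colorable_card[OF assms])

lemma b_fold_chromatic_le:
  "b_fold_colorable V E b k \<Longrightarrow> b_fold_chromatic V E b \<le> k"
  unfolding b_fold_chromatic_def by (rule Least_le)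

lemma bdd_below_b_fold_ratios:
  "bdd_below ((\<lambda>b. real (b_fold_chromatic V E b) / real b) ` {b::nat. b \<ge> 1})"
  by (rule bdd_belowI[of _ 0]) auto

lemma frac_chromatic_le:
  assumes "b_fold_colorable V E b k" "b \<ge> 1"
  shows "frac_chromatic V E \<le> real k / real b"
proof -
  have "frac_chromatic V E \<le> real (b_fold_chromatic V E b) / real b"
    unfolding frac_chromatic_def
    by (rule cINF_lower[OF bdd_below_b_fold_ratios]) (use assms in auto)
  also have "\<dots> \<le> real k / real b"
    using b_fold_chromatic_le[OF assms(1)] by (simp add: divide_right_mono)
  finally show ?thesis .
qed

lemma b_fold_colorable_le:
  assumes "b_fold_colorable V E b k" "v \<in> V"
  shows "b \<le> k"
proof -
  obtain c where "c v \<subseteq> {..<k}" "card (c v) = b"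
    using assms unfolding b_fold_colorable_def by blast
  then show ?thesis by (metis card_lessThan card_mono finite_lessThan)
qed

lemma b_fold_colorable_edge:
  assumes "b_fold_colorable V E b k" "u \<in> V" "v \<in> V" "E u v"
  shows "2 * b \<le> k"
proof -
  obtain c where c: "\<forall>v\<in>V. c v \<subseteq> {..<k} \<and> card (c v) = b"
     "\<forall>u\<in>V. \<forall>v\<in>V. E u v \<longrightarrow> c u \<inter> c v = {}"
    using assms(1) unfolding b_fold_colorable_def by blast
  have "card (c u \<union> c v) = b + b"
    using c assms by (subst card_Un_disjoint) (auto intro: finite_subset)
  moreover have "card (c u \<union> c v) \<le> k"
    using c assms by (metis Un_subset_iff card_lessThan card_mono finite_lessThan)
  ultimately show ?thesis by simp
qed

lemma frac_chromatic_ge_2: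
  assumes "finite V" "\<And>v. v \<in> V \<Longrightarrow> \<not> E v v" "u \<in> V" "v \<in> V" "E u v"
  shows "frac_chromatic V E \<ge> 2"
  unfolding frac_chromatic_def
proof (rule cINF_greatest)
  fix b :: nat assume "b \<in> {b. b \<ge> 1}"
  moreover have "2 * b \<le> b_fold_chromatic V E b"
    using b_fold_colorable_edge[OF b_fold_colorable_chromatic[OF assms(1,2)] assms(3-5)] .
  ultimately show "2 \<le> real (b_fold_chromatic V E b) / real b"
    by (simp add: field_simps)
qed auto

lemma exists_colour_in_many_sets:
  fixes c :: "'v \<Rightarrow> 'c set"
  assumes "finite W" "finite Col" "Col \<noteq> {}" "\<And>v. v \<in> W \<Longrightarrow> c v \<subseteq> Col \<and> card (c v) = B"
  shows "\<exists>a\<in>Col. real B * real (card W) \<le> real (card {v\<in>W. a \<in> c v}) * real (card Col)"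
proof (rule ccontr)
  assume "\<not> ?thesis"
  then have lt: "\<And>a. a \<in> Col \<Longrightarrow>
      real (card {v\<in>W. a \<in> c v}) * real (card Col) < real B * real (card W)"
    by force
  have "(\<Sum>a\<in>Col. card {v\<in>W. a \<in> c v})
      = (\<Sum>a\<in>Col. \<Sum>v\<in>W. if a \<in> c v then 1 else (0::nat))"
    using assms(1) by (simp add: sum.If_cases Int_def)
  also have "\<dots> = (\<Sum>v\<in>W. \<Sum>a\<in>Col. if a \<in> c v then 1 else (0::nat))"
    by (rule sum.swap)
  also have "\<dots> = (\<Sum>v\<in>W. card (c v))"
  proof (rule sum.cong[OF refl])
    fix v assume "v \<in> W"
    then have "Col \<inter> {a. a \<in> c v} = c v" using assms(4) by blast
    then show "(\<Sum>a\<in>Col. if a \<in> c v then 1 else (0::nat)) = card (c v)"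
      using assms(2) by (simp add: sum.If_cases)
  qed
  also have "\<dots> = B * card W" using assms(4) by simp
  finally have count: "(\<Sum>a\<in>Col. card {v\<in>W. a \<in> c v}) = B * card W" .
  have "(\<Sum>a\<in>Col. real (card {v\<in>W. a \<in> c v}) * real (card Col))
      < (\<Sum>a\<in>Col. real B * real (card W))"
    by (rule sum_strict_mono[OF assms(2,3) lt])
  then have "real (\<Sum>a\<in>Col. card {v\<in>W. a \<in> c v}) * real (card Col)
      < real (card Col) * (real B * real (card W))"
    by (simp add: sum_distrib_right)
  then show False unfolding count by simp
qed

lemma greedy_cover_iterate:
  fixes c :: "'v \<Rightarrow> 'c set"
  assumes "finite W" "finite Col" "Col \<noteq> {}" "\<And>v. v \<in> W \<Longrightarrow> c v \<subseteq> Col \<and> card (c v) = B"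
    and "B \<le> card Col"
  shows "\<exists>S\<subseteq>Col. card S \<le> s \<and>
     real (card {v\<in>W. c v \<inter> S = {}}) \<le> (1 - real B / real (card Col)) ^ s * real (card W)"
proof (induction s)
  case 0
  show ?case by (rule exI[of _ "{}"]) (auto intro: card_mono assms(1))
next
  case (Suc s)
  let ?p = "real B / real (card Col)"
  obtain S where S: "S \<subseteq> Col" "card S \<le> s"
    "real (card {v\<in>W. c v \<inter> S = {}}) \<le> (1 - ?p) ^ s * real (card W)"
    using Suc.IH by blast
  define W' where "W' = {v\<in>W. c v \<inter> S = {}}"
  have fW': "finite W'" using assms(1) by (simp add: W'_def)
  obtain a where a: "a \<in> Col"
    "real B * real (card W') \<le> real (card {v\<in>W'. a \<in> c v}) * real (card Col)"
    using exists_colour_in_many_sets[of W' Col c B] fW' assms(2-4) by (auto simp: W'_def)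
  have Col_pos: "real (card Col) > 0" using assms(2,3) by (simp add: card_gt_0_iff)
  have "{v\<in>W. c v \<inter> insert a S = {}} = W' - {v\<in>W'. a \<in> c v}" by (auto simp: W'_def)
  then have "real (card {v\<in>W. c v \<inter> insert a S = {}})
      = real (card W') - real (card {v\<in>W'. a \<in> c v})"
    using fW' by (simp add: card_Diff_subset card_mono of_nat_diff)
  also have "\<dots> \<le> (1 - ?p) * real (card W')"
    using a(2) Col_pos by (simp add: field_simps)
  also have "\<dots> \<le> (1 - ?p) * ((1 - ?p) ^ s * real (card W))"
    using S(3) assms(5) Col_pos by (intro mult_left_mono) (auto simp: W'_def divide_le_eq)
  finally have "real (card {v\<in>W. c v \<inter> insert a S = {}}) \<le> (1 - ?p) ^ Suc s * real (card W)"
    by simp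
  moreover have "card (insert a S) \<le> Suc s"
    using S(1,2) assms(2) by (metis card_insert_le_m1 diff_Suc_1 finite_subset le_SucI zero_less_Suc)
  ultimately show ?case using S(1) a(1) by (intro exI[of _ "insert a S"]) auto
qed

lemma one_minus_power_le_half:
  fixes p :: real and m :: nat
  assumes "0 \<le> p" "p \<le> 1" "p * m \<ge> 1"
  shows "(1 - p) ^ m \<le> 1/2"
proof -
  have "1 + m * p \<le> (1 + p) ^ m" using Bernoulli_inequality[of p m] assms by simp
  then have "2 \<le> (1 + p) ^ m" using assms by (simp add: mult.commute)
  moreover have "((1 - p) * (1 + p)) ^ m \<le> 1"
    using assms by (intro power_le_one) (auto simp: algebra_simps intro: mult_le_one)
  then have "(1 - p) ^ m * (1 + p) ^ m \<le> 1" by (simp add: power_mult_distrib)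
  ultimately have "(1 - p) ^ m * 2 \<le> 1"
    using assms by (meson dual_order.trans mult_left_mono zero_le_power diff_ge_0_iff_ge)
  then show ?thesis by simp
qed

lemma greedy_cover_halving:
  fixes c :: "'v \<Rightarrow> 'c set"
  assumes "finite W" "finite Col" "Col \<noteq> {}" "\<And>v. v \<in> W \<Longrightarrow> c v \<subseteq> Col \<and> card (c v) = B"
    and "B \<ge> 1" "B \<le> card Col"
  shows "\<exists>S\<subseteq>Col. card S \<le> nat \<lceil>real (card Col) / real B\<rceil> \<and>
     2 * card {v\<in>W. c v \<inter> S = {}} \<le> card W"
proof -
  let ?m = "nat \<lceil>real (card Col) / real B\<rceil>"
  let ?p = "real B / real (card Col)"
  have Col_pos: "real (card Col) > 0" using assms(2,3) by (simp add: card_gt_0_iff)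
  obtain S where S: "S \<subseteq> Col" "card S \<le> ?m"
     "real (card {v\<in>W. c v \<inter> S = {}}) \<le> (1 - ?p) ^ ?m * real (card W)"
    using greedy_cover_iterate[where c = c and s = ?m, OF assms(1-4,6)] by blast
  have B_pos: "real B > 0" using assms(5) by simp
  have "real (card Col) / real B \<le> real ?m" by (rule real_nat_ceiling_ge)
  then have "real (card Col) \<le> real ?m * real B"
    by (simp only: pos_divide_le_eq[OF B_pos])
  then have "?p * ?m \<ge> 1" using Col_pos by (simp add: field_simps)
  then have "(1 - ?p) ^ ?m \<le> 1/2"
    using one_minus_power_le_half[of ?p ?m] Col_pos assms(6) by simp
  then have "(1 - ?p) ^ ?m * real (card W) \<le> 1/2 * real (card W)"
    by (rule mult_right_mono) simp
  then have "real (2 * card {v\<in>W. c v \<inter> S = {}}) \<le> real (card W)"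
    using S(3) by simp
  then have "2 * card {v\<in>W. c v \<inter> S = {}} \<le> card W"
    by (simp only: of_nat_le_iff)
  with S(1,2) show ?thesis by blast
qed

lemma greedy_cover:
  fixes c :: "'v \<Rightarrow> 'c set"
  assumes "finite Col" "Col \<noteq> {}" "B \<ge> 1" "B \<le> card Col"
    and "\<And>v. v \<in> V \<Longrightarrow> c v \<subseteq> Col \<and> card (c v) = B" "finite V"
  shows "W \<subseteq> V \<Longrightarrow> card W < 2 ^ j \<Longrightarrow>
     \<exists>S\<subseteq>Col. card S \<le> nat \<lceil>real (card Col) / real B\<rceil> * j \<and> (\<forall>v\<in>W. c v \<inter> S \<noteq> {})"
proof (induction j arbitrary: W)
  case 0
  then have "W = {}" using assms(6) by (metis card_0_eq finite_subset less_one power_0)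
  then show ?case by (intro exI[of _ "{}"]) auto
next
  case (Suc j)
  let ?m = "nat \<lceil>real (card Col) / real B\<rceil>"
  have "finite W" using Suc.prems(1) assms(6) finite_subset by blast
  then obtain S where S: "S \<subseteq> Col" "card S \<le> ?m" "2 * card {v\<in>W. c v \<inter> S = {}} \<le> card W"
    using greedy_cover_halving[OF _ assms(1,2) _ assms(3,4), of W c] assms(5) Suc.prems(1) by blast
  then have "card {v\<in>W. c v \<inter> S = {}} < 2 ^ j" using Suc.prems(2) by simp
  then obtain S' where S': "S' \<subseteq> Col" "card S' \<le> ?m * j"
      "\<forall>v\<in>{v\<in>W. c v \<inter> S = {}}. c v \<inter> S' \<noteq> {}"
    using Suc.IH[of "{v\<in>W. c v \<inter> S = {}}"] Suc.prems(1) by blast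
  have "card (S \<union> S') \<le> ?m * Suc j"
    using card_Un_le[of S S'] S(2) S'(2) by simp
  moreover have "\<forall>v\<in>W. c v \<inter> (S \<union> S') \<noteq> {}" using S'(3) by blast
  ultimately show ?case using S(1) S'(1) by (intro exI[of _ "S \<union> S'"]) auto
qed

lemma colorable_of_b_fold_colorable:
  assumes "b_fold_colorable V E b K" "finite V" "b \<ge> 1" "card V < 2 ^ j"
  shows "b_fold_colorable V E 1 (nat \<lceil>real K / real b\<rceil> * j)"
proof (cases "V = {}")
  case True
  then show ?thesis by (simp add: b_fold_colorable_def)
next
  case False
  obtain c where c: "\<forall>v\<in>V. c v \<subseteq> {..<K} \<and> card (c v) = b"
      "\<forall>u\<in>V. \<forall>v\<in>V. E u v \<longrightarrow> c u \<inter> c v = {}"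
    using assms(1) unfolding b_fold_colorable_def by blast
  have "b \<le> K" using False b_fold_colorable_le[OF assms(1)] by blast
  then obtain S where S: "S \<subseteq> {..<K}" "card S \<le> nat \<lceil>real K / real b\<rceil> * j"
      "\<forall>v\<in>V. c v \<inter> S \<noteq> {}"
    using greedy_cover[of "{..<K}" b V c V j] assms(2-4) c by fastforce
  define sel where "sel v = (SOME a. a \<in> c v \<inter> S)" for v
  have sel: "sel v \<in> c v \<inter> S" if "v \<in> V" for v
  proof -
    from S(3) that have "\<exists>a. a \<in> c v \<inter> S" by blast
    then show ?thesis unfolding sel_def by (rule someI_ex)
  qed
  have "{sel u} \<inter> {sel v} = {}" if "u \<in> V" "v \<in> V" "E u v" for u v
    using sel[OF that(1)] sel[OF that(2)] c(2) that by (metis IntD1 disjoint_iff singletonD)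
  then have "b_fold_colorable V E 1 (card S)"
    using S(1) sel by (intro b_fold_colorable_by_colour_set[where c = "\<lambda>v. {sel v}"])
      (auto intro: finite_subset)
  then show ?thesis using S(2) by (rule b_fold_colorable_mono)
qed

lemma msgs_PiE: "msgs t = PiE UNIV (\<lambda>i. {xs::bool list. length xs = t i})"
  by (auto simp: msgs_def PiE_UNIV_domain)

lemma card_bool_lists_length: "card {xs::bool list. length xs = n} = 2 ^ n"
  using card_lists_length_eq[of "UNIV::bool set" n] by simp

lemma finite_bool_lists_length: "finite {xs::bool list. length xs = n}"
  using finite_lists_length_eq[of "UNIV::bool set" n] by simp

lemma finite_msgs: "finite (msgs (t :: 'n::finite \<Rightarrow> nat))"
  unfolding msgs_PiE by (rule finite_PiE) (auto simp: finite_bool_lists_length)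

lemma card_msgs: "card (msgs (t :: 'n::finite \<Rightarrow> nat)) = 2 ^ sum t UNIV"
  unfolding msgs_PiE by (simp add: card_PiE card_bool_lists_length power_sum)

lemma replicate_in_msgs: "(\<lambda>i. replicate (t i) False) \<in> msgs t"
  by (simp add: msgs_def)

lemma confusable_irrefl: "\<not> confusable A x x"
  by (simp add: confusable_def)

lemma exists_confusable_pair:
  assumes "\<And>j. j \<notin> A j" "t \<noteq> (\<lambda>_. 0)"
  shows "\<exists>x\<in>msgs t. \<exists>z\<in>msgs t. confusable A x z"
proof -
  obtain j where j: "t j \<noteq> 0" using assms(2) by auto
  define x where "x = (\<lambda>i. replicate (t i) False)"
  define z where "z = x(j := replicate (t j) True)"
  have "x j \<noteq> z j" using j by (cases "t j") (auto simp: x_def z_def)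
  moreover have "\<forall>i\<in>A j. x i = z i" using assms(1) by (auto simp: z_def)
  ultimately have "confusable A x z" by (auto simp: confusable_def)
  moreover have "x \<in> msgs t" "z \<in> msgs t" by (auto simp: msgs_def x_def z_def)
  ultimately show ?thesis by blast
qed

lemma chi_f_confusion_ge_2:
  fixes A :: "'n::finite \<Rightarrow> 'n set"
  assumes "\<And>j. j \<notin> A j" "t \<noteq> (\<lambda>_. 0)"
  shows "chi_f_confusion A t \<ge> 2"
proof -
  obtain x z where "x \<in> msgs t" "z \<in> msgs t" "confusable A x z"
    using exists_confusable_pair[OF assms] by blast
  then show ?thesis unfolding chi_f_confusion_def
    by (intro frac_chromatic_ge_2[OF finite_msgs]) (auto simp: confusable_irrefl)
qed

lemma index_code_imp_colorable:
  assumes "index_code A t r \<phi> \<psi>"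
  shows "b_fold_colorable (msgs t) (confusable A) 1 (2 ^ r)"
proof -
  have len: "\<forall>x\<in>msgs t. length (\<phi> x) = r"
    and dec: "\<forall>j. \<forall>x\<in>msgs t. \<psi> j (\<phi> x) (restrict x (A j)) = x j"
    using assms by (auto simp: index_code_def)
  have "\<phi> u \<noteq> \<phi> v" if uv: "u \<in> msgs t" "v \<in> msgs t" "confusable A u v" for u v
  proof
    assume eq: "\<phi> u = \<phi> v"
    obtain j where j: "u j \<noteq> v j" "\<forall>i\<in>A j. u i = v i"
      using uv(3) by (auto simp: confusable_def)
    have "restrict u (A j) = restrict v (A j)" using j(2) by (auto simp: restrict_def)
    then have "u j = v j" using dec uv(1,2) eq by metis
    with j(1) show False by simp
  qed
  then have "b_fold_colorable (msgs t) (confusable A) 1 (card {xs::bool list. length xs = r})"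
    by (intro b_fold_colorable_by_colour_set[where c = "\<lambda>x. {\<phi> x}"])
      (auto simp: len finite_bool_lists_length)
  then show ?thesis by (simp add: card_bool_lists_length)
qed

lemma colorable_imp_index_code:
  fixes A :: "'n \<Rightarrow> 'n set"
  assumes "b_fold_colorable (msgs t) (confusable A) 1 (2 ^ r)" "r > 0"
  shows "\<exists>\<phi> \<psi>. index_code A t r \<phi> \<psi>"
proof -
  obtain c :: "('n \<Rightarrow> bool list) \<Rightarrow> nat set"
    where c: "\<forall>v\<in>msgs t. c v \<subseteq> {..<2 ^ r} \<and> card (c v) = 1"
      "\<forall>u\<in>msgs t. \<forall>v\<in>msgs t. confusable A u v \<longrightarrow> c u \<inter> c v = {}"
    using assms(1) unfolding b_fold_colorable_def by blast
  have "card {..<(2::nat) ^ r} \<le> card {xs::bool list. length xs = r}"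
    by (simp add: card_bool_lists_length)
  from card_le_inj[OF finite_lessThan finite_bool_lists_length this]
  obtain e :: "nat \<Rightarrow> bool list" where e: "e ` {..<2 ^ r} \<subseteq> {xs. length xs = r}" "inj_on e {..<2 ^ r}"
    by blast
  define col where "col x = the_elem (c x)" for x
  define \<phi> where "\<phi> x = e (col x)" for x
  define \<psi> where "\<psi> j w y = (SOME x. x \<in> msgs t \<and> \<phi> x = w \<and> restrict x (A j) = y) j" for j w y
  have col: "c x = {col x}" "col x < 2 ^ r" if "x \<in> msgs t" for x
    using c(1) that by (auto simp: col_def card_1_singleton_iff)
  have "\<psi> j (\<phi> x) (restrict x (A j)) = x j" if x: "x \<in> msgs t" for j x
  proof -
    define x' where "x' = (SOME x'. x' \<in> msgs t \<and> \<phi> x' = \<phi> x \<and> restrict x' (A j) = restrict x (A j))"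
    have x': "x' \<in> msgs t" "\<phi> x' = \<phi> x" "restrict x' (A j) = restrict x (A j)"
      using someI_ex[of "\<lambda>x'. x' \<in> msgs t \<and> \<phi> x' = \<phi> x \<and> restrict x' (A j) = restrict x (A j)"] x
      unfolding x'_def by blast+
    have "x' j = x j"
    proof (rule ccontr)
      assume "x' j \<noteq> x j"
      moreover have "\<forall>i\<in>A j. x' i = x i" using x'(3) by (metis restrict_apply')
      ultimately have "c x' \<inter> c x = {}" using c(2) x'(1) x by (auto simp: confusable_def)
      moreover have "col x' = col x"
        using inj_onD[OF e(2) x'(2)[unfolded \<phi>_def]] col(2) x'(1) x by simp
      ultimately show False using col(1) x'(1) x by (metis Int_absorb insert_not_empty)
    qed
    then show ?thesis unfolding \<psi>_def x'_def .
  qed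
  moreover have "length (\<phi> x) = r" if "x \<in> msgs t" for x
    using e(1) col(2)[OF that] by (auto simp: \<phi>_def)
  ultimately have "index_code A t r \<phi> \<psi>" using assms(2) by (auto simp: index_code_def)
  then show ?thesis by blast
qed

definition blk :: "('n \<Rightarrow> nat) \<Rightarrow> nat \<Rightarrow> ('n \<Rightarrow> bool list) \<Rightarrow> ('n \<Rightarrow> bool list)" where
  "blk t m x = (\<lambda>i. take (t i) (drop (m * t i) (x i)))"

lemma blk_in_msgs:
  assumes "x \<in> msgs (\<lambda>i. k * t i)" "m < k"
  shows "blk t m x \<in> msgs t"
proof -
  have "t i \<le> k * t i - m * t i" for i
    using mult_le_mono1[of "Suc m" k "t i"] assms(2) by simp
  then show ?thesis using assms(1) by (auto simp: msgs_def blk_def min_absorb1)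
qed

lemma list_eq_if_chunks_eq:
  assumes "length xs = k * n" "length ys = k * n"
    and "\<forall>m<k. take n (drop (m * n) xs) = take n (drop (m * n) ys)"
  shows "xs = ys"
proof (rule nth_equalityI)
  show "length xs = length ys" using assms by simp
  fix p assume p: "p < length xs"
  then have n: "n > 0" using assms(1) by (cases n) auto
  define m where "m = p div n"
  define q where "q = p mod n"
  have pq: "p = m * n + q" by (simp add: m_def q_def)
  have q: "q < n" using n by (simp add: q_def)
  have m: "m < k" using p assms(1) unfolding m_def
    by (metis less_mult_imp_div_less mult.commute)
  have "xs ! p = take n (drop (m * n) xs) ! q" using q pq p by simp
  also have "\<dots> = take n (drop (m * n) ys) ! q" using assms(3) m by simp
  also have "\<dots> = ys ! p"
    using m q pq p assms by (simp add: nth_drop)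
  finally show "xs ! p = ys ! p" .
qed

lemma blk_confusable:
  assumes "x \<in> msgs (\<lambda>i. k * t i)" "z \<in> msgs (\<lambda>i. k * t i)" "confusable A x z"
  shows "\<exists>m<k. confusable A (blk t m x) (blk t m z)"
proof -
  obtain j where j: "x j \<noteq> z j" "\<forall>i\<in>A j. x i = z i"
    using assms(3) by (auto simp: confusable_def)
  have "\<exists>m<k. take (t j) (drop (m * t j) (x j)) \<noteq> take (t j) (drop (m * t j) (z j))"
    using list_eq_if_chunks_eq[of "x j" k "t j" "z j"] assms(1,2) j(1) by (auto simp: msgs_def)
  then obtain m where "m < k" "blk t m x j \<noteq> blk t m z j" by (auto simp: blk_def)
  moreover have "\<forall>i\<in>A j. blk t m x i = blk t m z i" using j(2) by (simp add: blk_def)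
  ultimately show ?thesis by (auto simp: confusable_def)
qed

lemma b_fold_colorable_blocks:
  assumes "b_fold_colorable (msgs t) (confusable A) b K"
  shows "b_fold_colorable (msgs (\<lambda>i. k * t i)) (confusable A) (b ^ k) (K ^ k)"
proof -
  obtain c where c: "\<forall>v\<in>msgs t. c v \<subseteq> {..<K} \<and> card (c v) = b"
     "\<forall>u\<in>msgs t. \<forall>v\<in>msgs t. confusable A u v \<longrightarrow> c u \<inter> c v = {}"
    using assms unfolding b_fold_colorable_def by blast
  define Col where "Col = PiE {..<k} (\<lambda>_. {..<K})"
  define c' where "c' x = PiE {..<k} (\<lambda>m. c (blk t m x))" for x
  have "c' v \<subseteq> Col \<and> card (c' v) = b ^ k" if "v \<in> msgs (\<lambda>i. k * t i)" for v
  proof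
    have blocks: "\<And>m. m \<in> {..<k} \<Longrightarrow> blk t m v \<in> msgs t"
      using blk_in_msgs that by auto
    then show "c' v \<subseteq> Col" unfolding c'_def Col_def
      using c(1) by (intro PiE_mono) blast
    have "card (c' v) = (\<Prod>m\<in>{..<k}. card (c (blk t m v)))" by (simp add: c'_def card_PiE)
    also have "\<dots> = (\<Prod>m\<in>{..<k}. b)" using blocks c(1) by (intro prod.cong) auto
    finally show "card (c' v) = b ^ k" by simp
  qed
  moreover have "c' x \<inter> c' z = {}"
    if xz: "x \<in> msgs (\<lambda>i. k * t i)" "z \<in> msgs (\<lambda>i. k * t i)" "confusable A x z" for x z
  proof -
    obtain m where m: "m < k" "confusable A (blk t m x) (blk t m z)"
      using blk_confusable[OF xz] by blast
    then have "c (blk t m x) \<inter> c (blk t m z) = {}"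
      using c(2) blk_in_msgs xz(1,2) by blast
    then show ?thesis using m(1) by (auto simp: c'_def PiE_iff)
  qed
  ultimately have "b_fold_colorable (msgs (\<lambda>i. k * t i)) (confusable A) (b ^ k) (card Col)"
    by (intro b_fold_colorable_by_colour_set[where c = c']) (auto simp: Col_def finite_PiE)
  then show ?thesis by (simp add: Col_def card_PiE)
qed

lemma exists_power_of_two_bound:
  assumes "X \<ge> 1"
  shows "\<exists>r::nat. r > 0 \<and> X \<le> 2 ^ r \<and> real r \<le> log 2 (real X) + 2"
proof -
  define l where "l = log 2 (real X)"
  have l0: "l \<ge> 0" using assms by (simp add: l_def)
  define r where "r = nat \<lceil>l\<rceil> + 1"
  have "real X = 2 powr l" using assms by (simp add: l_def)
  also have "\<dots> \<le> 2 powr real (nat \<lceil>l\<rceil>)" by (intro powr_mono) (use l0 in linarith, simp)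
  also have "\<dots> \<le> 2 ^ r" by (simp add: r_def powr_realpow)
  finally have "X \<le> 2 ^ r" by (metis of_nat_le_iff of_nat_numeral of_nat_power)
  moreover have "real r \<le> l + 2" using l0 by (simp add: r_def) linarith
  ultimately show ?thesis unfolding l_def r_def by auto
qed

lemma index_code_of_b_fold_colorable:
  fixes t :: "'n::finite \<Rightarrow> nat"
  assumes "b_fold_colorable (msgs t) (confusable A) b K" "b \<ge> 1"
  shows "\<exists>r \<phi> \<psi>. index_code A (\<lambda>i. k * t i) r \<phi> \<psi> \<and>
    real r \<le> real k * log 2 (real K / real b) + log 2 (real k * real (sum t UNIV) + 1) + 3"
proof -
  define q where "q = real K / real b"
  define T where "T = sum t UNIV"
  define m where "m = nat \<lceil>q ^ k\<rceil>"
  define X where "X = m * (k * T + 1)"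
  have "b \<le> K" using b_fold_colorable_le[OF assms(1) replicate_in_msgs] .
  then have q1: "q \<ge> 1" using assms(2) by (simp add: q_def)
  have "card (msgs (\<lambda>i. k * t i)) < 2 ^ (k * T + 1)"
    by (simp add: card_msgs T_def sum_distrib_left)
  from colorable_of_b_fold_colorable[OF b_fold_colorable_blocks[OF assms(1)] finite_msgs _ this]
  have "b_fold_colorable (msgs (\<lambda>i. k * t i)) (confusable A) 1 X"
    using assms(2) by (simp add: X_def m_def q_def power_divide)
  moreover have "q ^ k \<ge> 1" using q1 by (rule one_le_power)
  then have "1 \<le> \<lceil>q ^ k\<rceil>" by (simp add: le_ceiling_iff)
  then have m1: "m \<ge> 1" unfolding m_def by linarith
  then obtain r where r: "r > 0" "X \<le> 2 ^ r" "real r \<le> log 2 (real X) + 2"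
    using exists_power_of_two_bound[of X] by (auto simp: X_def)
  ultimately have "b_fold_colorable (msgs (\<lambda>i. k * t i)) (confusable A) 1 (2 ^ r)"
    using b_fold_colorable_mono by blast
  then obtain \<phi> \<psi> where code: "index_code A (\<lambda>i. k * t i) r \<phi> \<psi>"
    using colorable_imp_index_code r(1) by blast
  have "real m = real_of_int \<lceil>q ^ k\<rceil>" using \<open>1 \<le> \<lceil>q ^ k\<rceil>\<close> by (simp add: m_def)
  then have "real m \<le> 2 * q ^ k" using ceiling_correct[of "q ^ k"] \<open>q ^ k \<ge> 1\<close> by linarith
  then have "log 2 (real m) \<le> log 2 (2 * q ^ k)" using m1 by simp
  also have "\<dots> = 1 + real k * log 2 q" using q1 by (simp add: log_mult_pos log_nat_power)
  finally have "log 2 (real m) \<le> 1 + real k * log 2 q" .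
  moreover have "real X = real m * (real k * real T + 1)" by (simp add: X_def algebra_simps)
  then have "log 2 (real X) = log 2 (real m) + log 2 (real k * real T + 1)"
    using m1 by (auto intro!: log_mult_pos add_nonneg_pos)
  ultimately have "log 2 (real X) \<le> 1 + real k * log 2 q + log 2 (real k * real T + 1)"
    by simp
  then show ?thesis using code r(3) unfolding q_def T_def by fastforce
qed

lemma exists_log_linear_le:
  assumes "g > 0"
  shows "\<exists>k::nat. log 2 (real k * real T + 1) + 3 \<le> real k * g"
proof -
  have "((\<lambda>k::nat. (log 2 (real k * real T + 1) + 3) / real k) \<longlongrightarrow> 0) sequentially"
  proof (cases "T = 0")
    case True
    then show ?thesis by simp real_asymp
  next
    case False
    then have "real T > 0" by simp
    then show ?thesis by real_asymp
  qed
  then have "eventually (\<lambda>k::nat. (log 2 (real k * real T + 1) + 3) / real k < g \<and> k \<ge> 1)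
      sequentially"
    using assms by (intro eventually_conj order_tendstoD(2) eventually_ge_at_top)
  then obtain k :: nat where "(log 2 (real k * real T + 1) + 3) / real k < g" "k \<ge> 1"
    using eventually_happens'[OF sequentially_bot] by blast
  then have "log 2 (real k * real T + 1) + 3 < g * real k" by (simp add: divide_less_eq)
  then show ?thesis by (intro exI[of _ k]) (simp add: mult.commute)
qed

lemma index_code_near_rate:
  fixes A :: "'n::finite \<Rightarrow> 'n set"
  assumes "\<And>j. j \<notin> A j" "t \<noteq> (\<lambda>_. 0)" "0 < \<theta>" "\<theta> < 1"
  shows "\<exists>k r \<phi> \<psi>. index_code A (\<lambda>i. k * t i) r \<phi> \<psi> \<and>
           \<theta> * real r \<le> real k * log 2 (chi_f_confusion A t)"
proof -
  define F where "F = chi_f_confusion A t"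
  have F2: "F \<ge> 2" unfolding F_def by (rule chi_f_confusion_ge_2[OF assms(1,2)])
  have "F powr 1 < F powr (1 / \<theta>)"
    using assms(3,4) F2 by (intro powr_less_mono) (auto simp: field_simps)
  then have "F < F powr (1 / \<theta>)" using F2 by simp
  then obtain b :: nat where b: "b \<ge> 1"
      "real (b_fold_chromatic (msgs t) (confusable A) b) / real b < F powr (1 / \<theta>)"
    using F2 unfolding F_def chi_f_confusion_def frac_chromatic_def
    by (subst (asm) cINF_less_iff[OF _ bdd_below_b_fold_ratios]) auto
  define K where "K = b_fold_chromatic (msgs t) (confusable A) b"
  have col: "b_fold_colorable (msgs t) (confusable A) b K"
    unfolding K_def by (rule b_fold_colorable_chromatic) (auto simp: finite_msgs confusable_irrefl)
  have "b \<le> K" using b_fold_colorable_le[OF col replicate_in_msgs] .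
  then have "log 2 (real K / real b) < log 2 (F powr (1 / \<theta>))"
    using b F2 by (simp add: K_def)
  also have "\<dots> = log 2 F / \<theta>" by (simp add: log_powr)
  finally have g: "log 2 F / \<theta> - log 2 (real K / real b) > 0" by simp
  \<comment> \<open>the slack between log F and \<theta> log (K/b) absorbs the covering overhead for large k\<close>
  obtain k :: nat where k: "log 2 (real k * real (sum t UNIV) + 1) + 3
      \<le> real k * (log 2 F / \<theta> - log 2 (real K / real b))"
    using exists_log_linear_le[OF g] by blast
  obtain r \<phi> \<psi> where code: "index_code A (\<lambda>i. k * t i) r \<phi> \<psi>"
    and r: "real r \<le> real k * log 2 (real K / real b) + log 2 (real k * real (sum t UNIV) + 1) + 3"
    using index_code_of_b_fold_colorable[OF col b(1)] by blast
  have "real r \<le> real k * log 2 F / \<theta>" using r k by (simp add: algebra_simps)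
  then have "\<theta> * real r \<le> real k * log 2 F" using assms(3) by (simp add: field_simps)
  then show ?thesis using code unfolding F_def by blast
qed

lemma achievable_imp_chi_f_rate:
  fixes A :: "'n::finite \<Rightarrow> 'n set"
  assumes "\<And>j. j \<notin> A j" "achievable A R"
  shows "(\<forall>j. R $ j \<ge> 0) \<and>
    (\<exists>t. t \<noteq> (\<lambda>_. 0) \<and> (\<forall>j. R $ j \<le> real (t j) / log 2 (chi_f_confusion A t)))"
proof -
  obtain t r \<phi> \<psi> where R0: "\<forall>j. R $ j \<ge> 0" and code: "index_code A t r \<phi> \<psi>"
      and R_le: "\<forall>j. R $ j \<le> real (t j) / real r"
    using assms(2) unfolding achievable_def by blast
  show ?thesis
  proof (cases "t = (\<lambda>_. 0)")
    case True
    \<comment> \<open>then R = 0, which the rates of t = 1 also dominate\<close>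
    have "R $ j = 0" for j using R0 R_le True by (metis div_0 of_nat_0 order_antisym)
    moreover have "chi_f_confusion A (\<lambda>_. 1) \<ge> 2"
      by (rule chi_f_confusion_ge_2[OF assms(1)]) (simp add: fun_eq_iff)
    then have "log 2 (chi_f_confusion A (\<lambda>_. 1)) > 0" by simp
    ultimately show ?thesis using R0 by (intro conjI exI[of _ "\<lambda>_. 1::nat"]) (auto simp: fun_eq_iff)
  next
    case False
    define F where "F = chi_f_confusion A t"
    have F2: "F \<ge> 2" unfolding F_def by (rule chi_f_confusion_ge_2[OF assms(1) False])
    have "F \<le> 2 ^ r"
      using frac_chromatic_le[OF index_code_imp_colorable[OF code]]
      by (simp add: F_def chi_f_confusion_def)
    then have "log 2 F \<le> log 2 (2 ^ r)" using F2 by (subst log_le_cancel_iff) auto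
    then have "log 2 F \<le> real r" by (simp add: log_nat_power)
    moreover have "log 2 F \<ge> 1" using F2 by simp
    ultimately have "real (t j) / real r \<le> real (t j) / log 2 F" for j
      by (intro divide_left_mono) auto
    then have "R $ j \<le> real (t j) / log 2 F" for j
      using R_le order_trans by blast
    then show ?thesis using R0 False unfolding F_def by blast
  qed
qed

lemma chi_f_rate_scaled_achievable:
  fixes A :: "'n::finite \<Rightarrow> 'n set"
  assumes "\<And>j. j \<notin> A j" "t \<noteq> (\<lambda>_. 0)" "\<forall>j. R $ j \<ge> 0"
    and "\<forall>j. R $ j \<le> real (t j) / log 2 (chi_f_confusion A t)" "0 < \<theta>" "\<theta> < 1"
  shows "achievable A (\<theta> *\<^sub>R R)"
proof -
  define L where "L = log 2 (chi_f_confusion A t)"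
  have L1: "L \<ge> 1" using chi_f_confusion_ge_2[OF assms(1,2)] by (simp add: L_def)
  obtain k r \<phi> \<psi> where code: "index_code A (\<lambda>i. k * t i) r \<phi> \<psi>"
      and bound: "\<theta> * real r \<le> real k * L"
    using index_code_near_rate[OF assms(1,2,5,6)] unfolding L_def by blast
  have r: "real r > 0" using code by (simp add: index_code_def)
  have "(\<theta> *\<^sub>R R) $ j \<le> real (k * t j) / real r" for j
  proof -
    have "(\<theta> *\<^sub>R R) $ j \<le> \<theta> * (real (t j) / L)"
      using mult_left_mono[OF assms(4)[rule_format, of j] less_imp_le[OF assms(5)]]
      by (simp add: L_def)
    also have "\<dots> \<le> real (k * t j) / real r"
      using mult_right_mono[OF bound, of "real (t j)"] r L1 by (simp add: field_simps)
    finally show ?thesis .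
  qed
  moreover have "(\<theta> *\<^sub>R R) $ j \<ge> 0" for j using assms(3,5) by simp
  ultimately show ?thesis unfolding achievable_def using code by blast
qed

theorem theorem1:
  fixes A :: "'n::finite \<Rightarrow> 'n set"
  assumes "\<And>j. j \<notin> A j"
  shows "capacity_region A =
    closure {R :: real^'n. (\<forall>j. R $ j \<ge> 0) \<and>
       (\<exists>t :: 'n \<Rightarrow> nat. t \<noteq> (\<lambda>_. 0) \<and>
          (\<forall>j. R $ j \<le> real (t j) / log 2 (chi_f_confusion A t)))}"
    (is "_ = closure ?S")
proof
  show "capacity_region A \<subseteq> closure ?S"
    unfolding capacity_region_def
    by (rule closure_mono) (use achievable_imp_chi_f_rate[OF assms] in blast)
  have "R \<in> closure {R. achievable A R}" if "R \<in> ?S" for R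
  proof -
    define \<theta> where "\<theta> n = 1 - 1 / (real n + 2)" for n :: nat
    have "achievable A (\<theta> n *\<^sub>R R)" for n
      using that chi_f_rate_scaled_achievable[OF assms, of _ R "\<theta> n"]
      by (auto simp: \<theta>_def field_simps)
    moreover have "\<theta> \<longlonglongrightarrow> 1" unfolding \<theta>_def by real_asymp
    then have "(\<lambda>n. \<theta> n *\<^sub>R R) \<longlonglongrightarrow> R"
      using tendsto_scaleR[OF _ tendsto_const] by fastforce
    ultimately show ?thesis
      unfolding closure_sequential by (intro exI[of _ "\<lambda>n. \<theta> n *\<^sub>R R"]) auto
  qed
  then show "closure ?S \<subseteq> capacity_region A"
    unfolding capacity_region_def by (intro closure_minimal) auto
qed

end
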